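(* Let $\Omega_0\subseteq\mathbb{R}^{p+1}$ be a domain and $A_0,A_1\in C^{\omega}(\Omega_0,\mathbb{A})$. Then $$GCK[A_0]=HGCK[A_0,0]+\frac1q\,HGCK[0,D_{\mathbf{x}_p}A_0],$$ and $$HGCK[A_0,A_1]=\mathcal{PE}\big[GCK[A_0]\big]+q\,\mathcal{PO}\big[GCK[f_0]\big],$$ where $f_0\in C^\omega(\Omega_0,\mathbb{A})$ is a solution of $D_{\mathbf{x}_p}f_0=A_1$, if it exists (identities holding where all terms are defined).
   Context: Let $\mathbb{A}$ be a real alternative algebra (the associator $[a,b,c]=(ab)c-a(bc)$ is an alternating trilinear function) with unity $1$, of finite real dimension $d>1$, equipped with an anti-involution $a\mapsto a^c$ (real linear, $a^c=a$ for real $a$, $(a^c)^c=a$, $(ab)^c=b^ca^c$). Let $t(x)=x+x^c$, $n(x)=xx^c$, $\mathbb{S}_{\mathbb{A}}=\{x: t(x)=0,\ n(x)=1\}$ (assumed nonempty) and $Q_{\mathbb{A}}=\mathbb{R}\cup\{x: t(x)\in\mathbb{R},\ n(x)\in\mathbb{R},\ 4n(x)>t(x)^2\}$. Let $M$ be a real subspace with $\mathbb{R}\subsetneq M\subseteq Q_{\mathbb{A}}$ having a basis $(v_0,\dots,v_m)$, $m\ge1$, $v_0=1$, $v_s\in\mathbb{S}_{\mathbb{A}}$, $v_sv_t=-v_tv_s$ for distinct $s,t\ge1$; complete it to a basis of $\mathbb{A}$ with associated Euclidean norm. Identify $x=\sum x_sv_s\in M$ with $(x_0,\dots,x_m)\in\mathbb{R}^{m+1}$;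 differentiate componentwise; $C^\omega$ = componentwise real analytic. Fix $p\in\{0,\dots,m-1\}$, $q=m-p$; $\mathbf{x}=\mathbf{x}_p+\underline{\mathbf{x}}_q$ with $\mathbf{x}_p=\sum_{s=0}^px_sv_s\in\mathbb{R}^{p+1}$, $\underline{\mathbf{x}}_q=\sum_{s=p+1}^m x_sv_s$; $r=|\underline{\mathbf{x}}_q|$. $D_{\mathbf{x}_p}f=\sum_{s=0}^p v_s\partial_{x_s}f$, $\Delta_{\mathbf{x}_p}=\sum_{s=0}^p\partial_{x_s}^2$. With $\mathbf{x}_\diamond=\mathbf{x}_p-\underline{\mathbf{x}}_q$: $\mathcal{PE}[h](\mathbf{x})=\frac12(h(\mathbf{x})+h(\mathbf{x}_\diamond))$, $\mathcal{PO}[h](\mathbf{x})=\frac12(h(\mathbf{x})-h(\mathbf{x}_\diamond))$. The monogenic generalized CK-extension of real analytic $g$ on $\Omega_0$ is $GCK[g](\mathbf{x})=\sum_{k\ge0}\frac{\Gamma(\frac q2)(-1)^kr^{2k}}{2^{2k}k!\Gamma(k+\frac q2)}\Delta_{\mathbf{x}_p}^kg(\mathbf{x}_p)+\underline{\mathbf{x}}_q\sum_{k\ge0}\frac{\Gamma(\frac q2)(-1)^kr^{2k}}{2^{2k+1}k!\Gamma(k+\frac q2+1)}\Delta_{\mathbf{x}_p}^k(D_{\mathbf{x}_p}g(\mathbf{x}_p))$, the unique function of the form $\sum_k\underline{\mathbf{x}}_q^kA_k(\mathbf{x}_p)$ ($A_k$ real analytic, $A_0=g$) which is monogenic ($\sum_{s=0}^mv_s\partial_{x_s}f=0$)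 on a p-symmetric neighbourhood of $\Omega_0$; the harmonic generalized CK-extension of $(A_0,A_1)$ is $HGCK[A_0,A_1](\mathbf{x})=\sum_{k\ge0}\frac{\Gamma(\frac q2)(-1)^kr^{2k}}{2^{2k}k!\Gamma(k+\frac q2)}\Delta_{\mathbf{x}_p}^kA_0(\mathbf{x}_p)+\underline{\mathbf{x}}_q\sum_{k\ge0}\frac{\Gamma(\frac q2+1)(-1)^kr^{2k}}{2^{2k}k!\Gamma(k+\frac q2+1)}\Delta_{\mathbf{x}_p}^kA_1(\mathbf{x}_p)$, the unique function of the form $\sum_k\underline{\mathbf{x}}_q^kA_k(\mathbf{x}_p)$ with the given $A_0,A_1$ which is harmonic there. *)

theory Defs
  imports "HOL-Analysis.Analysis"
begin

definition assoc_A :: "('a::real_vector \<Rightarrow> 'a \<Rightarrow> 'a) \<Rightarrow> 'a \<Rightarrow> 'a \<Rightarrow> 'a \<Rightarrow> 'a" where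
  "assoc_A mul a b c = mul (mul a b) c - mul a (mul b c)"

definition is_real_A :: "'a::real_vector \<Rightarrow> 'a \<Rightarrow> bool" where
  "is_real_A one a \<longleftrightarrow> (\<exists>c::real. a = c *\<^sub>R one)"

definition alt_algebra :: "('a::real_vector \<Rightarrow> 'a \<Rightarrow> 'a) \<Rightarrow> 'a \<Rightarrow> ('a \<Rightarrow> 'a) \<Rightarrow> bool" where
  "alt_algebra mul one inv_c \<longleftrightarrow>
     bilinear mul \<and>
     (\<forall>a. mul one a = a \<and> mul a one = a) \<and>
     (\<forall>a b. assoc_A mul a a b = 0 \<and> assoc_A mul a b a = 0 \<and> assoc_A mul b a a = 0) \<and>
     linear inv_c \<and>
     (\<forall>c::real. inv_c (c *\<^sub>R one) = c *\<^sub>R one) \<and>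
     (\<forall>a. inv_c (inv_c a) = a) \<and>
     (\<forall>a b. inv_c (mul a b) = mul (inv_c b) (inv_c a))"

definition tr_A :: "('a::real_vector \<Rightarrow> 'a) \<Rightarrow> 'a \<Rightarrow> 'a" where
  "tr_A inv_c x = x + inv_c x"

definition nm_A :: "('a \<Rightarrow> 'a \<Rightarrow> 'a) \<Rightarrow> ('a \<Rightarrow> 'a) \<Rightarrow> 'a \<Rightarrow> 'a" where
  "nm_A mul inv_c x = mul x (inv_c x)"

definition sphere_A :: "('a::real_vector \<Rightarrow> 'a \<Rightarrow> 'a) \<Rightarrow> 'a \<Rightarrow> ('a \<Rightarrow> 'a) \<Rightarrow> 'a set" where
  "sphere_A mul one inv_c = {x. tr_A inv_c x = 0 \<and> nm_A mul inv_c x = one}"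

definition quadratic_cone_A :: "('a::real_vector \<Rightarrow> 'a \<Rightarrow> 'a) \<Rightarrow> 'a \<Rightarrow> ('a \<Rightarrow> 'a) \<Rightarrow> 'a set" where
  "quadratic_cone_A mul one inv_c =
     {x. is_real_A one x} \<union>
     {x. \<exists>t n::real. tr_A inv_c x = t *\<^sub>R one \<and> nm_A mul inv_c x = n *\<^sub>R one \<and> 4 * n > t\<^sup>2}"

definition adm_basis :: "('a::real_vector \<Rightarrow> 'a \<Rightarrow> 'a) \<Rightarrow> 'a \<Rightarrow> ('a \<Rightarrow> 'a) \<Rightarrow> nat \<Rightarrow> (nat \<Rightarrow> 'a) \<Rightarrow> bool" where
  "adm_basis mul one inv_c m v \<longleftrightarrow>
     1 \<le> m \<and> v 0 = one \<and>
     inj_on v {0..m} \<and> independent (v ` {0..m}) \<and>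
     (\<forall>s\<in>{1..m}. v s \<in> sphere_A mul one inv_c) \<and>
     (\<forall>s\<in>{1..m}. \<forall>t\<in>{1..m}. s \<noteq> t \<longrightarrow> mul (v s) (v t) = - mul (v t) (v s)) \<and>
     span (v ` {0..m}) \<subseteq> quadratic_cone_A mul one inv_c"

section \<open>Points of R^(n+1) as functions nat => real vanishing beyond n\<close>

definition xp :: "nat \<Rightarrow> (nat \<Rightarrow> real) \<Rightarrow> (nat \<Rightarrow> real)" where
  "xp p x = (\<lambda>i. if i \<le> p then x i else 0)"

definition xq_vec :: "(nat \<Rightarrow> 'a::real_vector) \<Rightarrow> nat \<Rightarrow> nat \<Rightarrow> (nat \<Rightarrow> real) \<Rightarrow> 'a" where
  "xq_vec v p m x = (\<Sum>s\<in>{p+1..m}. x s *\<^sub>R v s)"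

definition rq :: "nat \<Rightarrow> nat \<Rightarrow> (nat \<Rightarrow> real) \<Rightarrow> real" where
  "rq p m x = sqrt (\<Sum>s\<in>{p+1..m}. (x s)\<^sup>2)"

definition diamond :: "nat \<Rightarrow> (nat \<Rightarrow> real) \<Rightarrow> (nat \<Rightarrow> real)" where
  "diamond p x = (\<lambda>i. if i \<le> p then x i else - x i)"

definition PE :: "nat \<Rightarrow> ((nat \<Rightarrow> real) \<Rightarrow> 'a::real_vector) \<Rightarrow> (nat \<Rightarrow> real) \<Rightarrow> 'a" where
  "PE p h x = (1/2) *\<^sub>R (h x + h (diamond p x))"

definition PO :: "nat \<Rightarrow> ((nat \<Rightarrow> real) \<Rightarrow> 'a::real_vector) \<Rightarrow> (nat \<Rightarrow> real) \<Rightarrow> 'a" where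
  "PO p h x = (1/2) *\<^sub>R (h x - h (diamond p x))"

definition domain_p :: "nat \<Rightarrow> (nat \<Rightarrow> real) set \<Rightarrow> bool" where
  "domain_p p \<Omega> \<longleftrightarrow>
     \<Omega> \<noteq> {} \<and> \<Omega> \<subseteq> {y. \<forall>i>p. y i = 0} \<and>
     (\<forall>y\<in>\<Omega>. \<exists>e>0. \<forall>x. (\<forall>i>p. x i = 0) \<and> (\<forall>i\<le>p. \<bar>x i - y i\<bar> < e) \<longrightarrow> x \<in> \<Omega>) \<and>
     connected \<Omega>"

definition real_analytic_on_p :: "nat \<Rightarrow> (nat \<Rightarrow> real) set \<Rightarrow> ((nat \<Rightarrow> real) \<Rightarrow> 'a::real_normed_vector) \<Rightarrow> bool" where
  "real_analytic_on_p p \<Omega> g \<longleftrightarrow>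
     (\<forall>y\<in>\<Omega>. \<exists>e>0. \<exists>c :: (nat \<Rightarrow> nat) \<Rightarrow> 'a.
        \<forall>x. (\<forall>i>p. x i = 0) \<and> (\<forall>i\<le>p. \<bar>x i - y i\<bar> < e) \<longrightarrow>
          ((\<lambda>\<alpha>. (\<Prod>i\<le>p. (x i - y i) ^ \<alpha> i) *\<^sub>R c \<alpha>) has_sum g x) {\<alpha>. \<forall>i>p. \<alpha> i = 0})"

definition pd :: "nat \<Rightarrow> ((nat \<Rightarrow> real) \<Rightarrow> 'a::real_normed_vector) \<Rightarrow> (nat \<Rightarrow> real) \<Rightarrow> 'a" where
  "pd s g y = vector_derivative (\<lambda>t. g (y(s := y s + t))) (at 0)"

definition Dxp :: "('a::real_normed_vector \<Rightarrow> 'a \<Rightarrow> 'a) \<Rightarrow> (nat \<Rightarrow> 'a) \<Rightarrow> nat \<Rightarrow>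
                   ((nat \<Rightarrow> real) \<Rightarrow> 'a) \<Rightarrow> (nat \<Rightarrow> real) \<Rightarrow> 'a" where
  "Dxp mul v p g y = (\<Sum>s\<le>p. mul (v s) (pd s g y))"

definition Lap :: "nat \<Rightarrow> ((nat \<Rightarrow> real) \<Rightarrow> 'a::real_normed_vector) \<Rightarrow> (nat \<Rightarrow> real) \<Rightarrow> 'a" where
  "Lap p g y = (\<Sum>s\<le>p. pd s (pd s g) y)"

definition gck_c0 :: "real \<Rightarrow> real \<Rightarrow> nat \<Rightarrow> real" where
  "gck_c0 q r k = Gamma (q/2) * (-1)^k * r^(2*k) / (2^(2*k) * fact k * Gamma (real k + q/2))"

definition gck_c1 :: "real \<Rightarrow> real \<Rightarrow> nat \<Rightarrow> real" where
  "gck_c1 q r k = Gamma (q/2) * (-1)^k * r^(2*k) / (2^(2*k+1) * fact k * Gamma (real k + q/2 + 1))"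

definition hgck_c1 :: "real \<Rightarrow> real \<Rightarrow> nat \<Rightarrow> real" where
  "hgck_c1 q r k = Gamma (q/2 + 1) * (-1)^k * r^(2*k) / (2^(2*k) * fact k * Gamma (real k + q/2 + 1))"

text \<open>Series terms (q = m - p).\<close>

definition ser0 :: "nat \<Rightarrow> nat \<Rightarrow> ((nat \<Rightarrow> real) \<Rightarrow> 'a::real_normed_vector) \<Rightarrow> (nat \<Rightarrow> real) \<Rightarrow> nat \<Rightarrow> 'a" where
  "ser0 p m g x k = gck_c0 (real (m - p)) (rq p m x) k *\<^sub>R (Lap p ^^ k) g (xp p x)"

definition gser1 :: "('a::real_normed_vector \<Rightarrow> 'a \<Rightarrow> 'a) \<Rightarrow> (nat \<Rightarrow> 'a) \<Rightarrow> nat \<Rightarrow> nat \<Rightarrow>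
                     ((nat \<Rightarrow> real) \<Rightarrow> 'a) \<Rightarrow> (nat \<Rightarrow> real) \<Rightarrow> nat \<Rightarrow> 'a" where
  "gser1 mul v p m g x k = gck_c1 (real (m - p)) (rq p m x) k *\<^sub>R (Lap p ^^ k) (Dxp mul v p g) (xp p x)"

definition hser1 :: "nat \<Rightarrow> nat \<Rightarrow> ((nat \<Rightarrow> real) \<Rightarrow> 'a::real_normed_vector) \<Rightarrow> (nat \<Rightarrow> real) \<Rightarrow> nat \<Rightarrow> 'a" where
  "hser1 p m A1 x k = hgck_c1 (real (m - p)) (rq p m x) k *\<^sub>R (Lap p ^^ k) A1 (xp p x)"

definition GCK :: "('a::real_normed_vector \<Rightarrow> 'a \<Rightarrow> 'a) \<Rightarrow> (nat \<Rightarrow> 'a) \<Rightarrow> nat \<Rightarrow> nat \<Rightarrow>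
                   ((nat \<Rightarrow> real) \<Rightarrow> 'a) \<Rightarrow> (nat \<Rightarrow> real) \<Rightarrow> 'a" where
  "GCK mul v p m g x = (\<Sum>k. ser0 p m g x k) + mul (xq_vec v p m x) (\<Sum>k. gser1 mul v p m g x k)"

definition HGCK :: "('a::real_normed_vector \<Rightarrow> 'a \<Rightarrow> 'a) \<Rightarrow> (nat \<Rightarrow> 'a) \<Rightarrow> nat \<Rightarrow> nat \<Rightarrow>
                   ((nat \<Rightarrow> real) \<Rightarrow> 'a) \<Rightarrow> ((nat \<Rightarrow> real) \<Rightarrow> 'a) \<Rightarrow> (nat \<Rightarrow> real) \<Rightarrow> 'a" where
  "HGCK mul v p m A0 A1 x = (\<Sum>k. ser0 p m A0 x k) + mul (xq_vec v p m x) (\<Sum>k. hser1 p m A1 x k)"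

text \<open>"Defined at x": the defining series converge.\<close>

definition GCK_defined :: "('a::real_normed_vector \<Rightarrow> 'a \<Rightarrow> 'a) \<Rightarrow> (nat \<Rightarrow> 'a) \<Rightarrow> nat \<Rightarrow> nat \<Rightarrow>
                   ((nat \<Rightarrow> real) \<Rightarrow> 'a) \<Rightarrow> (nat \<Rightarrow> real) \<Rightarrow> bool" where
  "GCK_defined mul v p m g x \<longleftrightarrow> summable (ser0 p m g x) \<and> summable (gser1 mul v p m g x)"

definition HGCK_defined :: "nat \<Rightarrow> nat \<Rightarrow> ((nat \<Rightarrow> real) \<Rightarrow> 'a::real_normed_vector) \<Rightarrow>
                   ((nat \<Rightarrow> real) \<Rightarrow> 'a) \<Rightarrow> (nat \<Rightarrow> real) \<Rightarrow> bool" where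
  "HGCK_defined p m A0 A1 x \<longleftrightarrow> summable (ser0 p m A0 x) \<and> summable (hser1 p m A1 x)"

end

theory Submission
  imports Defs
begin

text \<open>Since \<open>\<Gamma>(q/2 + 1) = (q/2) \<Gamma>(q/2)\<close>, the coefficients of the odd series of \<open>GCK[g]\<close> are
exactly \<open>1/q\<close> times those of the odd series of \<open>HGCK\<close>, with \<open>D\<^sub>x\<^sub>p g\<close> in place of \<open>A\<^sub>1\<close>; the first
identity is then linearity of the extension in its data.
The reflection \<open>x \<mapsto> x\<^sub>\<diamond>\<close> fixes \<open>x\<^sub>p\<close> and \<open>r\<close> and changes the sign of \<open>x\<^sub>q\<close>, so \<open>PE\<close> and \<open>PO\<close> split
\<open>GCK[g]\<close> into its even series and its \<open>x\<^sub>q\<close>-multiplied odd series.  For the second identity it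
remains to replace \<open>D\<^sub>x\<^sub>p f\<^sub>0\<close> by \<open>A\<^sub>1\<close> inside the iterated Laplacians at \<open>x\<^sub>p\<close>, which is legitimate
because partial derivatives only see an open neighbourhood of the point in \<open>\<Omega>\<^sub>0\<close>.\<close>

lemma gck_c1_eq_hgck_c1_div:
  assumes "q > 0"
  shows "gck_c1 q r k = hgck_c1 q r k / q"
proof -
  have "q/2 \<notin> \<int>\<^sub>\<le>\<^sub>0"
    using assms by (auto elim!: nonpos_Ints_cases)
  then have Gamma_succ: "Gamma (q/2 + 1) = (q/2) * Gamma (q/2)"
    by (rule Gamma_plus1)
  have "Gamma (q/2) > 0" "Gamma (real k + q/2 + 1) > 0"
    using assms by auto
  then show ?thesis
    unfolding gck_c1_def hgck_c1_def Gamma_succ using assms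
    by (simp add: field_simps power_add)
qed

lemma gser1_eq_scaleR_hser1:
  assumes "p < m"
  shows "gser1 mul v p m g x k = (1 / real (m - p)) *\<^sub>R hser1 p m (Dxp mul v p g) x k"
  using gck_c1_eq_hgck_c1_div[of "real (m - p)"] assms
  by (simp add: gser1_def hser1_def)

lemma pd_const_zero: "pd s (\<lambda>_. 0) = (\<lambda>_. 0)"
  unfolding pd_def by (simp add: fun_eq_iff)

lemma funpow_Lap_zero: "(Lap p ^^ k) (\<lambda>_. 0) = (\<lambda>_. 0)"
  by (induction k) (simp_all add: Lap_def pd_const_zero)

lemma ser0_zero: "ser0 p m (\<lambda>_. 0) x = (\<lambda>_. 0)"
  by (simp add: ser0_def funpow_Lap_zero fun_eq_iff)

lemma hser1_zero: "hser1 p m (\<lambda>_. 0) x = (\<lambda>_. 0)"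
  by (simp add: hser1_def funpow_Lap_zero fun_eq_iff)

lemma domain_p_eventually_coordinate_shift:
  assumes "domain_p p \<Omega>" "y \<in> \<Omega>" "s \<le> p"
  shows "eventually (\<lambda>t. y(s := y s + t) \<in> \<Omega>) (nhds 0)"
proof -
  from assms(1,2) obtain e where "e > 0"
    and box: "\<And>x. (\<forall>i>p. x i = 0) \<Longrightarrow> (\<forall>i\<le>p. \<bar>x i - y i\<bar> < e) \<Longrightarrow> x \<in> \<Omega>"
    and y_support: "\<forall>i>p. y i = 0"
    unfolding domain_p_def by blast
  have "eventually (\<lambda>t::real. dist t 0 < e) (nhds 0)"
    using \<open>e > 0\<close> unfolding eventually_nhds_metric by blast
  then show ?thesis
    by (rule eventually_mono) (use \<open>s \<le> p\<close> \<open>e > 0\<close> y_support in \<open>auto intro!: box\<close>)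
qed

lemma pd_cong_domain_p:
  assumes "domain_p p \<Omega>" "\<forall>z\<in>\<Omega>. G z = H z" "s \<le> p" "y \<in> \<Omega>"
  shows "pd s G y = pd s H y"
proof -
  have "eventually (\<lambda>t. G (y(s := y s + t)) = H (y(s := y s + t))) (nhds 0)"
    using domain_p_eventually_coordinate_shift[OF assms(1,4,3)]
    by (rule eventually_mono) (use assms(2) in blast)
  then show ?thesis
    unfolding pd_def by (intro vector_derivative_cong_eq) (auto elim: eventually_mono)
qed

lemma funpow_Lap_cong_domain_p:
  assumes "domain_p p \<Omega>" "\<forall>z\<in>\<Omega>. G z = H z"
  shows "\<forall>y\<in>\<Omega>. (Lap p ^^ k) G y = (Lap p ^^ k) H y"
proof (induction k)
  case 0
  then show ?case using assms(2) by simp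
next
  case (Suc k)
  show ?case
  proof
    fix y assume "y \<in> \<Omega>"
    have "pd s (pd s ((Lap p ^^ k) G)) y = pd s (pd s ((Lap p ^^ k) H)) y" if "s \<le> p" for s
    proof -
      have "\<forall>z\<in>\<Omega>. pd s ((Lap p ^^ k) G) z = pd s ((Lap p ^^ k) H) z"
        using pd_cong_domain_p[OF assms(1) Suc.IH that] by blast
      then show ?thesis
        using pd_cong_domain_p[OF assms(1) _ that \<open>y \<in> \<Omega>\<close>] by blast
    qed
    then show "(Lap p ^^ Suc k) G y = (Lap p ^^ Suc k) H y"
      by (simp add: Lap_def)
  qed
qed

lemma xp_diamond: "xp p (diamond p x) = xp p x"
  by (auto simp: xp_def diamond_def)

lemma rq_diamond: "rq p m (diamond p x) = rq p m x"
  unfolding rq_def diamond_def by (intro arg_cong[where f = sqrt] sum.cong) auto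

lemma xq_vec_diamond: "xq_vec v p m (diamond p x) = - xq_vec v p m x"
  unfolding xq_vec_def diamond_def by (simp add: sum_negf[symmetric])

lemma ser0_diamond: "ser0 p m g (diamond p x) = ser0 p m g x"
  by (simp add: fun_eq_iff ser0_def xp_diamond rq_diamond)

lemma gser1_diamond: "gser1 mul v p m g (diamond p x) = gser1 mul v p m g x"
  by (simp add: fun_eq_iff gser1_def xp_diamond rq_diamond)

lemma GCK_diamond:
  assumes "bilinear mul"
  shows "GCK mul v p m g (diamond p x)
           = (\<Sum>k. ser0 p m g x k) - mul (xq_vec v p m x) (\<Sum>k. gser1 mul v p m g x k)"
  using assms by (simp add: GCK_def ser0_diamond gser1_diamond xq_vec_diamond bilinear_lneg)

lemma PE_GCK:
  assumes "bilinear mul"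
  shows "PE p (GCK mul v p m g) x = (\<Sum>k. ser0 p m g x k)"
  unfolding PE_def GCK_diamond[OF assms] by (simp add: GCK_def scaleR_2[symmetric])

lemma PO_GCK:
  assumes "bilinear mul"
  shows "PO p (GCK mul v p m g) x = mul (xq_vec v p m x) (\<Sum>k. gser1 mul v p m g x k)"
  unfolding PO_def GCK_diamond[OF assms] by (simp add: GCK_def scaleR_2[symmetric])

lemma suminf_gser1:
  assumes "p < m" "summable (hser1 p m (Dxp mul v p g) x)"
  shows "(\<Sum>k. gser1 mul v p m g x k)
           = (1 / real (m - p)) *\<^sub>R (\<Sum>k. hser1 p m (Dxp mul v p g) x k)"
  unfolding gser1_eq_scaleR_hser1[OF assms(1)] using suminf_scaleR_right[OF assms(2)] by simp

lemma GCK_eq_HGCK_even_plus_odd: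
  assumes "bilinear mul" "p < m" "summable (hser1 p m (Dxp mul v p g) x)"
  shows "GCK mul v p m g x
           = HGCK mul v p m g (\<lambda>_. 0) x
             + (1 / real (m - p)) *\<^sub>R HGCK mul v p m (\<lambda>_. 0) (Dxp mul v p g) x"
  using assms(1)
  by (simp add: GCK_def HGCK_def suminf_gser1[OF assms(2,3)] ser0_zero hser1_zero
      bilinear_rmul bilinear_rzero)

lemma HGCK_eq_PE_plus_PO:
  assumes "bilinear mul" "p < m" "domain_p p \<Omega>" "xp p x \<in> \<Omega>"
    and D_f: "\<forall>y\<in>\<Omega>. Dxp mul v p f y = h y"
    and "summable (hser1 p m h x)"
  shows "HGCK mul v p m g h x
           = PE p (GCK mul v p m g) x + real (m - p) *\<^sub>R PO p (GCK mul v p m f) x"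
proof -
  have "(Lap p ^^ k) (Dxp mul v p f) (xp p x) = (Lap p ^^ k) h (xp p x)" for k
    using funpow_Lap_cong_domain_p[OF assms(3) D_f] assms(4) by blast
  then have "hser1 p m (Dxp mul v p f) x = hser1 p m h x"
    by (simp add: fun_eq_iff hser1_def)
  then have "(\<Sum>k. gser1 mul v p m f x k) = (1 / real (m - p)) *\<^sub>R (\<Sum>k. hser1 p m h x k)"
    using suminf_gser1[OF assms(2), where g = f] assms(6) by simp
  then show ?thesis
    using assms(1,2) by (simp add: HGCK_def PE_GCK[OF assms(1)] PO_GCK[OF assms(1)] bilinear_rmul)
qed

theorem corollary3p17:
  fixes mul :: "'a::euclidean_space \<Rightarrow> 'a \<Rightarrow> 'a" and one :: 'a and inv_c :: "'a \<Rightarrow> 'a"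
    and v :: "nat \<Rightarrow> 'a" and m p :: nat and \<Omega>0 :: "(nat \<Rightarrow> real) set"
    and A0 A1 f0 :: "(nat \<Rightarrow> real) \<Rightarrow> 'a" and x :: "nat \<Rightarrow> real"
  assumes alg: "alt_algebra mul one inv_c"
    and dim: "DIM('a) > 1"
    and sph: "sphere_A mul one inv_c \<noteq> {}"
    and basis: "adm_basis mul one inv_c m v"
    and pm: "p < m"
    and dom: "domain_p p \<Omega>0"
    and anA0: "real_analytic_on_p p \<Omega>0 A0"
    and anA1: "real_analytic_on_p p \<Omega>0 A1"
    and xpt: "\<forall>i>m. x i = 0"
    and xin: "xp p x \<in> \<Omega>0"
  shows "(GCK_defined mul v p m A0 x \<and> HGCK_defined p m A0 (\<lambda>_. 0) x
           \<and> HGCK_defined p m (\<lambda>_. 0) (Dxp mul v p A0) x \<longrightarrow>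
         GCK mul v p m A0 x =
           HGCK mul v p m A0 (\<lambda>_. 0) x
           + (1 / real (m - p)) *\<^sub>R HGCK mul v p m (\<lambda>_. 0) (Dxp mul v p A0) x)
       \<and> (real_analytic_on_p p \<Omega>0 f0 \<and> (\<forall>y\<in>\<Omega>0. Dxp mul v p f0 y = A1 y)
           \<and> HGCK_defined p m A0 A1 x
           \<and> GCK_defined mul v p m A0 x \<and> GCK_defined mul v p m A0 (diamond p x)
           \<and> GCK_defined mul v p m f0 x \<and> GCK_defined mul v p m f0 (diamond p x) \<longrightarrow>
         HGCK mul v p m A0 A1 x =
           PE p (GCK mul v p m A0) x + real (m - p) *\<^sub>R PO p (GCK mul v p m f0) x)"
proof -
  have bil: "bilinear mul"
    using alg unfolding alt_algebra_def by blast
  show ?thesis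
    using GCK_eq_HGCK_even_plus_odd[OF bil pm, where g = A0 and v = v and x = x]
      HGCK_eq_PE_plus_PO[OF bil pm dom xin, where f = f0 and h = A1 and g = A0 and v = v]
    unfolding HGCK_defined_def by blast
qed

end
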